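(* Assume that a collection of nonnegative real numbers $\{\mu_n(a,k) : n\ge 0,\ a\in\{0,1\},\ k\in\mathbb{Z}\}$ satisfies, for all $n\ge 0$: (P1) for $a\in\{0,1\}$, $k\mapsto\mu_n(a,k)$ is $2^n$-periodic, i.e. $\mu_n(a,k)=\mu_n(a,k')$ whenever $k\equiv k'\pmod{2^n}$; (P2) letting $q_n$ denote an integer inverse of $3$ modulo $2^{n+1}$, for all $k\in\mathbb{Z}$ and $a\in\{0,1\}$, \[ \tfrac32\,\mu_n(a,k)=\mu_{n+1}(a,2q_nk)+\mu_{n+1}(\bar a,2q_nk-q_n)+\mu_{n+1}(a,2q_nk-2q_n), \] where $\bar a=1-a$; (P3) for all $k\in\mathbb{Z}$, $\mu_n(0,k)+\mu_n(1,k)=2^{-n}$. Then $\mu_n(a,k)=2^{-n-1}$ for all $n\ge 0$, $a\in\{0,1\}$ and $k\in\mathbb{Z}$. *)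

theory Defs
  imports "HOL-Number_Theory.Number_Theory"
begin

end

theory Submission
  imports Defs
begin

text \<open>
Put \<open>w\<^sub>n(k) = 2\<^sup>n (\<mu>\<^sub>n(0,k) - \<mu>\<^sub>n(1,k))\<close>. Then \<open>|w\<^sub>n| \<le> 1\<close>, \<open>w\<^sub>n\<close> is \<open>2\<^sup>n\<close>-periodic, and (P2) becomes
\<open>3 w\<^sub>n(k) = v(2k-2) - v(2k-1) + v(2k)\<close> for \<open>v(j) = w\<^sub>n\<^sub>+\<^sub>1(j q\<^sub>n)\<close>. The quadratic form
\<open>E\<^sub>n = \<Sum>\<^sub>k 5 w\<^sub>n(k)\<^sup>2 - w\<^sub>n(k) w\<^sub>n(k+1)\<close> over one period lies between \<open>4 \<Sum>\<^sub>k w\<^sub>n(k)\<^sup>2\<close> and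
\<open>6 \<cdot> 2\<^sup>n\<close>. Multiplication by \<open>q\<^sub>n\<close> permutes the residues mod \<open>2\<^sup>n\<^sup>+\<^sup>1\<close> and turns the lag 1 into
the lag 3, so \<open>E\<^sub>n\<^sub>+\<^sub>1 = \<Sum>\<^sub>j 5 v(j)\<^sup>2 - v(j) v(j+3)\<close>, and a sum-of-squares certificate gives
\<open>9 E\<^sub>n \<le> 4 E\<^sub>n\<^sub>+\<^sub>1\<close>. Hence \<open>E\<^sub>n \<le> (4/9)\<^sup>j \<cdot> 6 \<cdot> 2\<^sup>n\<^sup>+\<^sup>j \<longrightarrow> 0\<close>, so \<open>w\<^sub>n = 0\<close>, and (P3) splits
\<open>2\<^sup>-\<^sup>n\<close> evenly.
\<close>

definition energy :: "(int \<Rightarrow> real) \<Rightarrow> int \<Rightarrow> nat \<Rightarrow> real" where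
  "energy f d N = (\<Sum>k<N. 5 * (f (int k))\<^sup>2 - f (int k) * f (int k + d))"

lemma energy_cmult: "energy (\<lambda>k. c * f k) d N = c\<^sup>2 * energy f d N"
  unfolding energy_def sum_distrib_left
  by (rule sum.cong) (simp_all add: power2_eq_square algebra_simps)

lemma energy_le:
  assumes "\<And>k. \<bar>f k\<bar> \<le> 1"
  shows "energy f d N \<le> 6 * N"
proof -
  have "5 * (f k)\<^sup>2 - f k * f (k + d) \<le> 6" for k
  proof -
    have "\<bar>f k\<bar> * \<bar>f k'\<bar> \<le> 1" for k'
      using assms by (intro mult_le_one) auto
    then have "\<bar>f k * f k\<bar> \<le> 1" "\<bar>f k * f (k + d)\<bar> \<le> 1"
      by (simp_all only: abs_mult)
    then show ?thesis by (simp add: power2_eq_square abs_le_iff)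
  qed
  then have "energy f d N \<le> (\<Sum>k<N. 6)"
    unfolding energy_def by (intro sum_mono) auto
  then show ?thesis by simp
qed

lemma sum_lessThan_telescope_periodic:
  fixes f :: "int \<Rightarrow> 'a::ab_group_add"
  assumes "f (int N) = f 0"
  shows "(\<Sum>k<N. f (int k + 1) - f (int k)) = 0"
  using sum_lessThan_telescope[of "\<lambda>k. f (int k)" N] assms by (simp add: add.commute)

lemma sum_squares_le_energy:
  assumes periodic: "\<And>k k'. [k = k'] (mod int N) \<Longrightarrow> f k = f k'"
  shows "4 * (\<Sum>k<N. (f (int k))\<^sup>2) \<le> energy f 1 N"
proof -
  have "(\<Sum>k<N. (f (int k + 1))\<^sup>2 - (f (int k))\<^sup>2) = 0"
    using periodic[of "int N" 0] by (intro sum_lessThan_telescope_periodic) (simp add: cong_def)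
  moreover have "4 * (f (int k))\<^sup>2 - ((f (int k + 1))\<^sup>2 - (f (int k))\<^sup>2) / 2
      \<le> 5 * (f (int k))\<^sup>2 - f (int k) * f (int k + 1)" for k
    using zero_le_power2[of "f (int k) - f (int k + 1)"]
    by (simp add: power2_diff field_simps)
  then have "(\<Sum>k<N. 4 * (f (int k))\<^sup>2 - ((f (int k + 1))\<^sup>2 - (f (int k))\<^sup>2) / 2) \<le> energy f 1 N"
    unfolding energy_def by (rule sum_mono)
  ultimately show ?thesis
    by (simp add: sum_subtractf sum_distrib_left sum_divide_distrib[symmetric])
qed

lemma sum_lessThan_mult_coprime:
  fixes f :: "int \<Rightarrow> 'a::comm_monoid_add"
  assumes coprime: "coprime Q (int M)"
    and periodic: "\<And>k k'. [k = k'] (mod int M) \<Longrightarrow> f k = f k'"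
  shows "(\<Sum>j<M. f (int j * Q)) = (\<Sum>j<M. f (int j))"
proof (cases "M = 0")
  case False
  define g where "g j = nat (int j * Q mod int M)" for j
  have int_g: "int (g j) = int j * Q mod int M" for j
    unfolding g_def using False by simp
  have inj: "inj_on g {..<M}"
  proof (rule inj_onI)
    fix i j assume "i \<in> {..<M}" "j \<in> {..<M}" "g i = g j"
    then have "[int i * Q = int j * Q] (mod int M)"
      using int_g[of i] int_g[of j] by (simp add: cong_def)
    then have "[int i = int j] (mod int M)"
      using cong_mult_rcancel[OF coprime] by blast
    with \<open>i \<in> {..<M}\<close> \<open>j \<in> {..<M}\<close> show "i = j"
      by (simp add: cong_def)
  qed
  have "int (g j) < int M" for j
    using int_g[of j] False by simp
  then have "g ` {..<M} \<subseteq> {..<M}"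
    by auto
  with inj have "bij_betw g {..<M} {..<M}"
    by (simp add: bij_betw_def endo_inj_surj)
  have "(\<Sum>j<M. f (int j * Q)) = (\<Sum>j<M. f (int (g j)))"
    by (intro sum.cong refl periodic) (simp add: int_g cong_def)
  also have "\<dots> = (\<Sum>j<M. f (int j))"
    using sum.reindex_bij_betw[OF \<open>bij_betw g {..<M} {..<M}\<close>] .
  finally show ?thesis .
qed simp

lemma energy_dilate:
  assumes "coprime Q (int M)"
    and periodic: "\<And>k k'. [k = k'] (mod int M) \<Longrightarrow> f k = f k'"
  shows "energy f (Q * d) M = energy (\<lambda>j. f (j * Q)) d M"
proof -
  define F where "F x = 5 * (f x)\<^sup>2 - f x * f (x + Q * d)" for x
  have "F k = F k'" if "[k = k'] (mod int M)" for k k'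
    unfolding F_def using periodic[OF that] periodic[OF cong_add[OF that cong_refl]] by simp
  then have "(\<Sum>j<M. F (int j * Q)) = (\<Sum>j<M. F (int j))"
    by (rule sum_lessThan_mult_coprime[OF assms(1)])
  moreover have "int j * Q + Q * d = (int j + d) * Q" for j
    by (simp add: algebra_simps)
  ultimately show ?thesis
    unfolding energy_def F_def by simp
qed

lemma energy_cong_lag:
  assumes periodic: "\<And>k k'. [k = k'] (mod int M) \<Longrightarrow> f k = f k'"
    and "[d = d'] (mod int M)"
  shows "energy f d M = energy f d' M"
  unfolding energy_def using assms(2)
  by (intro sum.cong refl arg_cong2[where f = "(-)"] arg_cong2[where f = "(*)"] periodic cong_add)
    simp_all

text \<open>
The contraction only holds up to the telescoping term \<open>corrector\<close>, which sums to zero over a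
period; with it, the deficit is an explicit sum of squares.
\<close>

definition corrector :: "real \<Rightarrow> real \<Rightarrow> real \<Rightarrow> real \<Rightarrow> real \<Rightarrow> real" where
  "corrector a b c d e = 7*a*a - 10*a*b + 5*a*c - 3*a*d + 9*b*b - 4*b*c + b*d - b*e - 4*c*c
     + 2*c*e - d*d - e*e"

lemma energy_contraction_pointwise:
  fixes x0 x1 x2 x3 x4 x5 x6 :: real
  shows "5 * (x0 - x1 + x2)\<^sup>2 - (x0 - x1 + x2) * (x2 - x3 + x4)
           + (corrector x2 x3 x4 x5 x6 - corrector x0 x1 x2 x3 x4)
         \<le> 4 * (5 * x2\<^sup>2 - x2 * x5 + 5 * x3\<^sup>2 - x3 * x6)"
proof -
  have "4 * (5 * x2\<^sup>2 - x2 * x5 + 5 * x3\<^sup>2 - x3 * x6)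
      - (5 * (x0 - x1 + x2)\<^sup>2 - (x0 - x1 + x2) * (x2 - x3 + x4)
           + (corrector x2 x3 x4 x5 x6 - corrector x0 x1 x2 x3 x4))
    = 2 * (x0 - x2 - x3 + x4/4)\<^sup>2 + 4 * (x1 + 5/8*x2 + x3/4 - x4/4)\<^sup>2
      + 23/16 * (x2 + 30/23*x3 + 2/23*x4 - 8/23*x5)\<^sup>2
      + 122/23 * (x3 + 119/244*x4 + 7/244*x5 - 69/244*x6)\<^sup>2
      + 165/122 * (x4 - x5/44 - 131/660*x6)\<^sup>2 + 289/352 * (x5 + 13/289*x6)\<^sup>2
      + 2258/4335 * x6\<^sup>2"
    unfolding corrector_def by (simp add: power2_eq_square algebra_simps)
  also have "\<dots> \<ge> 0"
    by simp
  finally show ?thesis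
    by simp
qed

lemma energy_contraction:
  fixes v :: "int \<Rightarrow> real"
  assumes periodic: "\<And>k k'. [k = k'] (mod 2 * int N) \<Longrightarrow> v k = v k'"
  shows "energy (\<lambda>k. v (2*k - 2) - v (2*k - 1) + v (2*k)) 1 N \<le> 4 * energy v 3 (2 * N)"
proof -
  define c where "c k = corrector (v (2*k - 2)) (v (2*k - 1)) (v (2*k)) (v (2*k + 1)) (v (2*k + 2))"
    for k
  have shift: "v (2 * int N + t) = v t" for t
    by (rule periodic) (simp add: cong_def)
  have "c (int N) = c 0"
    unfolding c_def using shift[of "-2"] shift[of "-1"] shift[of 0] shift[of 1] shift[of 2]
    by (simp add: algebra_simps)
  then have telescope: "(\<Sum>k<N. c (int k + 1) - c (int k)) = 0"
    by (rule sum_lessThan_telescope_periodic)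
  define h where "h j = 5 * (v (int j))\<^sup>2 - v (int j) * v (int j + 3)" for j
  have "energy v 3 (2 * N) = (\<Sum>j<2 * N. h j)"
    unfolding energy_def h_def ..
  also have "\<dots> = (\<Sum>k<N. h (2 * k) + h (2 * k + 1))"
    using sum_split_even_odd[of h h N] by (simp add: sum.distrib)
  finally have pairs: "energy v 3 (2 * N) = (\<Sum>k<N. h (2 * k) + h (2 * k + 1))" .
  moreover have "energy (\<lambda>k. v (2*k - 2) - v (2*k - 1) + v (2*k)) 1 N + (\<Sum>k<N. c (int k + 1) - c (int k))
      \<le> (\<Sum>k<N. 4 * (h (2 * k) + h (2 * k + 1)))"
    unfolding energy_def sum.distrib[symmetric]
  proof (rule sum_mono)
    fix k
    show "5 * (v (2 * int k - 2) - v (2 * int k - 1) + v (2 * int k))\<^sup>2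
      - (v (2 * int k - 2) - v (2 * int k - 1) + v (2 * int k))
        * (v (2 * (int k + 1) - 2) - v (2 * (int k + 1) - 1) + v (2 * (int k + 1)))
      + (c (int k + 1) - c (int k))
      \<le> 4 * (h (2 * k) + h (2 * k + 1))"
      using energy_contraction_pointwise[of "v (2 * int k - 2)" "v (2 * int k - 1)" "v (2 * int k)"
          "v (2 * int k + 1)" "v (2 * int k + 2)" "v (2 * int k + 3)" "v (2 * int k + 4)"]
      unfolding c_def h_def by (simp add: algebra_simps)
  qed
  then show ?thesis
    using telescope pairs by (simp add: sum_distrib_left)
qed

lemma energy_step:
  fixes w0 w1 :: "int \<Rightarrow> real"
  assumes periodic: "\<And>k k'. [k = k'] (mod 2 * int N) \<Longrightarrow> w1 k = w1 k'"
    and inverse: "[3 * Q = 1] (mod 2 * int N)"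
    and recurrence: "\<And>k. 3 * w0 k = w1 (2 * Q * k) - w1 (2 * Q * k - Q) + w1 (2 * Q * k - 2 * Q)"
  shows "9 * energy w0 1 N \<le> 4 * energy w1 1 (2 * N)"
proof -
  define v where "v j = w1 (j * Q)" for j
  have "(\<lambda>k. 3 * w0 k) = (\<lambda>k. v (2*k - 2) - v (2*k - 1) + v (2*k))"
    unfolding recurrence v_def by (simp add: algebra_simps)
  moreover have "v k = v k'" if "[k = k'] (mod 2 * int N)" for k k'
    unfolding v_def using that by (intro periodic cong_mult cong_refl)
  ultimately have "9 * energy w0 1 N \<le> 4 * energy v 3 (2 * N)"
    using energy_contraction[of N v] energy_cmult[of 3 w0] by simp
  also have "energy v 3 (2 * N) = energy w1 (Q * 3) (2 * N)"
    unfolding v_def using periodic inverse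
    by (intro energy_dilate[symmetric]) (auto simp: coprime_iff_invertible_int mult.commute)
  also have "\<dots> = energy w1 1 (2 * N)"
    using periodic inverse by (intro energy_cong_lag) (simp_all add: mult.commute)
  finally show ?thesis
    by simp
qed

lemma nonpos_if_grows_faster_than_bound:
  fixes S :: "nat \<Rightarrow> real"
  assumes growth: "\<And>n. S n \<le> r * S (n + 1)" and bound: "\<And>n. S n \<le> C * b ^ n"
    and "0 \<le> r" "0 \<le> b" "r * b < 1"
  shows "S n \<le> 0"
proof (rule LIMSEQ_le_const)
  have "S n \<le> r ^ j * S (n + j)" for j
  proof (induction j)
    case (Suc j)
    note Suc.IH
    also have "r ^ j * S (n + j) \<le> r ^ j * (r * S (n + Suc j))"
      using growth[of "n + j"] \<open>0 \<le> r\<close> by (intro mult_left_mono) auto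
    finally show ?case
      by (simp add: ac_simps)
  qed simp
  also have "r ^ j * S (n + j) \<le> r ^ j * (C * b ^ (n + j))" for j
    using bound \<open>0 \<le> r\<close> by (intro mult_left_mono) auto
  also have "r ^ j * (C * b ^ (n + j)) = C * b ^ n * (r * b) ^ j" for j
    by (simp add: power_add power_mult_distrib)
  finally show "\<exists>N. \<forall>j\<ge>N. S n \<le> C * b ^ n * (r * b) ^ j"
    by blast
  show "(\<lambda>j. C * b ^ n * (r * b) ^ j) \<longlonglongrightarrow> 0"
    using assms by (intro tendsto_mult_right_zero LIMSEQ_power_zero) simp
qed

lemma eq_0_if_energy_expands:
  fixes w :: "nat \<Rightarrow> int \<Rightarrow> real"
  assumes bounded: "\<And>n k. \<bar>w n k\<bar> \<le> 1"
    and periodic: "\<And>n k k'. [k = k'] (mod 2 ^ n) \<Longrightarrow> w n k = w n k'"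
    and expands: "\<And>n. 9 * energy (w n) 1 (2 ^ n) \<le> 4 * energy (w (n + 1)) 1 (2 ^ (n + 1))"
  shows "w n k = 0"
proof -
  have "energy (w n) 1 (2 ^ n) \<le> 0"
  proof (rule nonpos_if_grows_faster_than_bound[where S = "\<lambda>n. energy (w n) 1 (2 ^ n)"])
    show "energy (w n) 1 (2 ^ n) \<le> 4 / 9 * energy (w (n + 1)) 1 (2 ^ (n + 1))" for n
      using expands[of n] by simp
    show "energy (w n) 1 (2 ^ n) \<le> 6 * 2 ^ n" for n
      using energy_le[of "w n" 1 "2 ^ n"] bounded by simp
  qed simp_all
  moreover have "4 * (\<Sum>i<2 ^ n. (w n (int i))\<^sup>2) \<le> energy (w n) 1 (2 ^ n)"
    using periodic by (intro sum_squares_le_energy) simp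
  ultimately have "(\<Sum>i<2 ^ n. (w n (int i))\<^sup>2) = 0"
    using sum_nonneg[of "{..<2 ^ n}" "\<lambda>i. (w n (int i))\<^sup>2"] by simp
  then have "w n (int i) = 0" if "i < 2 ^ n" for i
    using that by (simp add: sum_nonneg_eq_0_iff)
  moreover have "[k = int (nat (k mod 2 ^ n))] (mod 2 ^ n)" "nat (k mod 2 ^ n) < 2 ^ n"
    by (simp_all add: cong_def nat_less_iff)
  ultimately show ?thesis
    using periodic by metis
qed

definition imbalance :: "(nat \<Rightarrow> nat \<Rightarrow> int \<Rightarrow> real) \<Rightarrow> nat \<Rightarrow> int \<Rightarrow> real" where
  "imbalance \<mu> n k = 2 ^ n * (\<mu> n 0 k - \<mu> n 1 k)"

lemma abs_imbalance_le_1: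
  assumes "0 \<le> \<mu> n 0 k" "0 \<le> \<mu> n 1 k" "\<mu> n 0 k + \<mu> n 1 k = 1 / 2 ^ n"
  shows "\<bar>imbalance \<mu> n k\<bar> \<le> 1"
proof -
  have "2 ^ n * \<mu> n 0 k + 2 ^ n * \<mu> n 1 k = 1"
    using assms(3) by (simp add: field_simps)
  moreover have "0 \<le> 2 ^ n * \<mu> n 0 k" "0 \<le> 2 ^ n * \<mu> n 1 k"
    using assms(1,2) by simp_all
  ultimately show ?thesis
    unfolding imbalance_def by (simp add: right_diff_distrib abs_le_iff)
qed

lemma imbalance_recurrence:
  assumes "3 / 2 * \<mu> n 0 k = \<mu> (n + 1) 0 x + \<mu> (n + 1) 1 y + \<mu> (n + 1) 0 z"
    and "3 / 2 * \<mu> n 1 k = \<mu> (n + 1) 1 x + \<mu> (n + 1) 0 y + \<mu> (n + 1) 1 z"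
  shows "3 * imbalance \<mu> n k = imbalance \<mu> (n + 1) x - imbalance \<mu> (n + 1) y + imbalance \<mu> (n + 1) z"
proof -
  have "3 * imbalance \<mu> n k = 2 ^ (n + 1) * (3 / 2 * \<mu> n 0 k - 3 / 2 * \<mu> n 1 k)"
    by (simp add: imbalance_def)
  also have "\<dots> = imbalance \<mu> (n + 1) x - imbalance \<mu> (n + 1) y + imbalance \<mu> (n + 1) z"
    unfolding assms imbalance_def by (simp add: algebra_simps)
  finally show ?thesis .
qed

theorem proposition20:
  fixes \<mu> :: "nat \<Rightarrow> nat \<Rightarrow> int \<Rightarrow> real"
    and q :: "nat \<Rightarrow> int"
  assumes nonneg: "\<And>n a k. a \<le> 1 \<Longrightarrow> \<mu> n a k \<ge> 0"
    and q_inv: "\<And>n. [3 * q n = 1] (mod 2 ^ (n + 1))"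
    and P1: "\<And>n a k k'. a \<le> 1 \<Longrightarrow> [k = k'] (mod 2 ^ n) \<Longrightarrow> \<mu> n a k = \<mu> n a k'"
    and P2: "\<And>n a k. a \<le> 1 \<Longrightarrow>
       3 / 2 * \<mu> n a k = \<mu> (n + 1) a (2 * q n * k) + \<mu> (n + 1) (1 - a) (2 * q n * k - q n)
                          + \<mu> (n + 1) a (2 * q n * k - 2 * q n)"
    and P3: "\<And>n k. \<mu> n 0 k + \<mu> n 1 k = 1 / 2 ^ n"
  shows "\<forall>n a k. a \<le> 1 \<longrightarrow> \<mu> n a k = 1 / 2 ^ (n + 1)"
proof -
  let ?w = "imbalance \<mu>"
  have bounded: "\<bar>?w n k\<bar> \<le> 1" for n k
    using nonneg P3 by (intro abs_imbalance_le_1) auto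
  have periodic: "?w n k = ?w n k'" if "[k = k'] (mod 2 ^ n)" for n k k'
    unfolding imbalance_def using P1[OF _ that] by simp
  have "3 * ?w n k = ?w (n + 1) (2 * q n * k) - ?w (n + 1) (2 * q n * k - q n)
                     + ?w (n + 1) (2 * q n * k - 2 * q n)" for n k
    using P2[of 0 n k] P2[of 1 n k] by (intro imbalance_recurrence) simp_all
  then have "9 * energy (?w n) 1 (2 ^ n) \<le> 4 * energy (?w (n + 1)) 1 (2 ^ (n + 1))" for n
    using energy_step[of "2 ^ n" "?w (n + 1)" "q n" "?w n"] periodic q_inv by simp
  then have "?w n k = 0" for n k
    using eq_0_if_energy_expands[of ?w] bounded periodic by blast
  then have "\<mu> n 0 k = \<mu> n 1 k" for n k
    by (simp add: imbalance_def)
  then show ?thesis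
    using P3 by (auto simp: le_Suc_eq field_simps)
qed

end
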